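(* Let $c\in\mathcal{C}$ be in addition piecewise twice differentiable with bounded second derivative. For each $n$, let $0=\theta_{n,0}<\theta_{n,1}<\dots<\theta_{n,k_n}=2\pi$ and let $c_n$ be the polygonal curve with vertices $c(\theta_{n,0}),c(\theta_{n,1}),\dots,c(\theta_{n,k_n})$, parametrized as the piecewise linear interpolation of $c$ at the parameters $\theta_{n,i}$. If $\max_i(\theta_{n,i+1}-\theta_{n,i})\to 0$ as $n\to\infty$, then $\mu_{c_n}$ converges weakly to $\mu_c$.
   Context: The plane is identified with $\mathbb{C}$, and $\mathbb{S}^1$ with $[0,2\pi)$ (or the unit circle in $\mathbb{C}$). $\mathcal{C}$ denotes the set of Lipschitz maps $c:\mathbb{S}^1\to\mathbb{C}$ with $c'(\theta)\neq 0$ for a.e. $\theta$. For $c\in\mathcal{C}$, the Gauss map is $T_c(\theta)=c'(\theta)/|c'(\theta)|$, and the length measure of $c$ is the positive Radon measure $\mu_c$ on $\mathbb{S}^1$ defined by $\mu_c(B)=\int_{T_c^{-1}(B)}|c'(\theta)|d\theta$ for Borel $B$. Weak convergence of measures on $\mathbb{S}^1$ means convergence of integrals against every continuous function on $\mathbb{S}^1$. *)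

theory Defs
  imports "HOL-Analysis.Analysis"
begin

text \<open>Curves \<open>S^1 \<rightarrow> \<complex>\<close> are represented as \<open>2\<pi>\<close>-periodic maps \<open>real \<Rightarrow> complex\<close>;
  the derivative \<open>c'\<close> is the (a.e. existing) vector derivative.\<close>

definition periodic_2pi :: "(real \<Rightarrow> complex) \<Rightarrow> bool" where
  "periodic_2pi c \<longleftrightarrow> (\<forall>t. c (t + 2*pi) = c t)"

definition curve_class :: "(real \<Rightarrow> complex) \<Rightarrow> bool" where
  "curve_class c \<longleftrightarrow> periodic_2pi c \<and> (\<exists>L. L-lipschitz_on UNIV c) \<and>
     (AE t in lborel. c differentiable (at t) \<and> vector_derivative c (at t) \<noteq> 0)"

text \<open>Gauss map \<open>T_c = c'/|c'|\<close> (with an irrelevant value on the null set where it is undefined),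
  taking values in the unit circle.\<close>
definition gauss_map :: "(real \<Rightarrow> complex) \<Rightarrow> real \<Rightarrow> complex" where
  "gauss_map c t = (if c differentiable (at t) \<and> vector_derivative c (at t) \<noteq> 0
      then sgn (vector_derivative c (at t)) else 1)"

text \<open>Length measure \<open>\<mu>_c(B) = \<integral>_{T_c^{-1}(B)} |c'|\<close>, a measure on the unit circle.\<close>
definition length_measure :: "(real \<Rightarrow> complex) \<Rightarrow> complex measure" where
  "length_measure c =
     distr (density (lebesgue_on {0..<2*pi}) (\<lambda>t. ennreal (norm (vector_derivative c (at t)))))
           (restrict_space borel (sphere 0 1)) (gauss_map c)"

definition weak_conv_circle :: "(nat \<Rightarrow> complex measure) \<Rightarrow> complex measure \<Rightarrow> bool" where
  "weak_conv_circle \<mu>s \<mu> \<longleftrightarrow>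
     (\<forall>f :: complex \<Rightarrow> real. continuous_on (sphere 0 1) f \<longrightarrow>
        (\<lambda>n. integral\<^sup>L (\<mu>s n) f) \<longlonglongrightarrow> integral\<^sup>L \<mu> f)"

definition piecewise_C2_bounded :: "(real \<Rightarrow> complex) \<Rightarrow> bool" where
  "piecewise_C2_bounded c \<longleftrightarrow>
     (\<exists>S M c1 c2. finite S \<and>
        (\<forall>t\<in>{0<..<2*pi} - S. (c has_vector_derivative c1 t) (at t) \<and>
                              (c1 has_vector_derivative c2 t) (at t) \<and> norm (c2 t) \<le> M))"

definition polygonal_interp ::
  "(real \<Rightarrow> complex) \<Rightarrow> (nat \<Rightarrow> real) \<Rightarrow> nat \<Rightarrow> (real \<Rightarrow> complex) \<Rightarrow> bool" where
  "polygonal_interp c \<theta> k cn \<longleftrightarrow>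
     \<theta> 0 = 0 \<and> \<theta> k = 2*pi \<and> (\<forall>i<k. \<theta> i < \<theta> (Suc i)) \<and> periodic_2pi cn \<and>
     (\<forall>i<k. \<forall>t\<in>{\<theta> i..\<theta> (Suc i)}.
        cn t = c (\<theta> i) + of_real ((t - \<theta> i) / (\<theta> (Suc i) - \<theta> i)) * (c (\<theta> (Suc i)) - c (\<theta> i)))"

end

theory Submission
  imports Defs
begin

text \<open>Off the countable set of nodes, the derivative of the polygon \<open>c\<^sub>n\<close> at \<open>t\<close> is the slope
  of the chord of \<open>c\<close> over the segment of the \<open>n\<close>-th partition containing \<open>t\<close>. As the mesh tends
  to \<open>0\<close>, these chord slopes converge to \<open>c'(t)\<close> wherever \<open>c\<close> is differentiable, and they are
  bounded by the Lipschitz constant of \<open>c\<close>. Since \<open>\<integral> f d\<mu>\<^sub>c = \<integral>\<^sub>0\<^sup>2\<^sup>\<pi> |c'| f(T\<^sub>c)\<close> and \<open>sgn\<close>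
  is continuous away from \<open>0\<close>, the integrands for \<open>c\<^sub>n\<close> converge almost everywhere to the one
  for \<open>c\<close>, and dominated convergence concludes.\<close>

definition chord_slope :: "(real \<Rightarrow> 'a::real_normed_vector) \<Rightarrow> real \<Rightarrow> real \<Rightarrow> 'a" where
  "chord_slope f a b = (f b - f a) /\<^sub>R (b - a)"

lemma chord_slope_tendsto_vector_derivative:
  fixes f :: "real \<Rightarrow> 'a::real_normed_vector"
  assumes der: "(f has_vector_derivative D) (at t)"
    and ab: "\<And>n. a n \<le> t" "\<And>n. t \<le> b n" "\<And>n. a n < b n"
    and lim: "(\<lambda>n. b n - a n) \<longlonglongrightarrow> 0"
  shows "(\<lambda>n. chord_slope f (a n) (b n)) \<longlonglongrightarrow> D"
proof (rule LIMSEQ_I)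
  fix e :: real assume e: "e > 0"
  have "(f has_derivative (\<lambda>h. h *\<^sub>R D)) (at t within UNIV)"
    using der by (simp add: has_vector_derivative_def)
  then obtain \<delta> where "\<delta> > 0" and
    \<delta>: "\<And>y. norm (y - t) < \<delta> \<Longrightarrow> norm (f y - f t - (y - t) *\<^sub>R D) \<le> (e/2) * norm (y - t)"
    unfolding has_derivative_within_alt using e by (meson UNIV_I half_gt_zero)
  with lim obtain M where M: "\<And>n. n \<ge> M \<Longrightarrow> b n - a n < \<delta>"
    using LIMSEQ_D by fastforce
  show "\<exists>M. \<forall>n\<ge>M. norm (chord_slope f (a n) (b n) - D) < e"
  proof (intro exI allI impI)
    fix n assume "n \<ge> M"
    then have small: "b n - a n < \<delta>" by (rule M)
    let ?rb = "f (b n) - f t - (b n - t) *\<^sub>R D" and ?ra = "f (a n) - f t - (a n - t) *\<^sub>R D"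
    have "norm ?rb \<le> (e/2) * (b n - t)" "norm ?ra \<le> (e/2) * (t - a n)"
      using \<delta>[of "b n"] \<delta>[of "a n"] small ab[of n] by auto
    moreover have "f (b n) - f (a n) - (b n - a n) *\<^sub>R D = ?rb - ?ra"
      by (simp add: algebra_simps)
    ultimately have "norm (f (b n) - f (a n) - (b n - a n) *\<^sub>R D) \<le> (e/2) * (b n - a n)"
      using norm_triangle_ineq4[of ?rb ?ra] by (simp add: algebra_simps)
    moreover have "chord_slope f (a n) (b n) - D = (f (b n) - f (a n) - (b n - a n) *\<^sub>R D) /\<^sub>R (b n - a n)"
      using ab[of n] by (simp add: chord_slope_def scaleR_diff_right)
    ultimately have "norm (chord_slope f (a n) (b n) - D) \<le> e/2"
      using ab[of n] by (simp add: divide_simps mult.commute)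
    then show "norm (chord_slope f (a n) (b n) - D) < e"
      using e by linarith
  qed
qed

lemma norm_chord_slope_le:
  assumes "L-lipschitz_on S f" "a \<in> S" "b \<in> S" "a \<noteq> b"
  shows "norm (chord_slope f a b) \<le> L"
proof -
  have "norm (f b - f a) \<le> L * \<bar>b - a\<bar>"
    using lipschitz_onD[OF assms(1-3)] by (simp add: dist_norm norm_minus_commute abs_minus_commute)
  then show ?thesis
    using assms(4) by (simp add: chord_slope_def divide_simps mult.commute)
qed

lemma countable_imp_negligible: "countable S \<Longrightarrow> negligible S"
  by (simp add: negligible_iff_null_sets countable_imp_null_set_lborel null_sets_completionI)

lemma borel_measurable_lebesgue_on_spike:
  fixes f g :: "real \<Rightarrow> 'a::euclidean_space"
  assumes "f \<in> borel_measurable (lebesgue_on S)" "S \<in> sets lebesgue" "negligible N"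
    and "\<And>t. t \<in> S - N \<Longrightarrow> g t = f t"
  shows "g \<in> borel_measurable (lebesgue_on S)"
  using measurable_on_spike[of f S N g] measurable_on_iff_borel_measurable assms by metis

lemma borel_measurable_vector_derivative:
  fixes f :: "real \<Rightarrow> 'a::euclidean_space"
  assumes cont: "continuous_on UNIV f" and S: "S \<in> sets lebesgue" and N: "negligible N"
    and diff: "\<And>t. t \<in> S - N \<Longrightarrow> f differentiable (at t)"
  shows "(\<lambda>t. vector_derivative f (at t)) \<in> borel_measurable (lebesgue_on S)"
proof (rule borel_measurable_lebesgue_on_spike[OF _ S N])
  let ?q = "\<lambda>i t. chord_slope f t (t + 1 / Suc i)"
  have [measurable]: "?q i \<in> borel_measurable (lebesgue_on S)" for i
  proof (rule continuous_imp_measurable_on_sets_lebesgue[OF _ S])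
    have "continuous_on UNIV (?q i)"
      unfolding chord_slope_def by (intro continuous_intros continuous_on_compose2[OF cont]) auto
    then show "continuous_on S (?q i)"
      by (rule continuous_on_subset) auto
  qed
  show "(\<lambda>t. lim (\<lambda>i. ?q i t)) \<in> borel_measurable (lebesgue_on S)"
    by measurable
  show "vector_derivative f (at t) = lim (\<lambda>i. ?q i t)" if "t \<in> S - N" for t
  proof -
    have "(\<lambda>i. ?q i t) \<longlonglongrightarrow> vector_derivative f (at t)"
    proof (rule chord_slope_tendsto_vector_derivative)
      show "(f has_vector_derivative vector_derivative f (at t)) (at t)"
        using diff[OF that] vector_derivative_works by blast
      show "(\<lambda>i. t + 1 / Suc i - t) \<longlonglongrightarrow> 0"
        using LIMSEQ_inverse_real_of_nat by (simp add: inverse_eq_divide)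
    qed auto
    then show ?thesis
      by (simp add: limI)
  qed
qed

lemma gauss_map_in_sphere: "gauss_map f t \<in> sphere 0 1"
  by (simp add: gauss_map_def norm_sgn)

lemma gauss_map_tendsto:
  assumes lim: "(\<lambda>n. vector_derivative (fs n) (at t)) \<longlonglongrightarrow> vector_derivative f (at t)"
    and "f differentiable (at t)" and nonzero: "vector_derivative f (at t) \<noteq> 0"
    and "\<And>n. fs n differentiable (at t)"
  shows "(\<lambda>n. gauss_map (fs n) t) \<longlonglongrightarrow> gauss_map f t"
proof -
  have "\<forall>\<^sub>F n in sequentially. vector_derivative (fs n) (at t) \<noteq> 0"
    using tendsto_imp_eventually_ne[OF lim nonzero] .
  then have "\<forall>\<^sub>F n in sequentially. sgn (vector_derivative (fs n) (at t)) = gauss_map (fs n) t"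
    by eventually_elim (simp add: gauss_map_def assms(4))
  moreover have "(\<lambda>n. sgn (vector_derivative (fs n) (at t))) \<longlonglongrightarrow> gauss_map f t"
    using tendsto_sgn[OF lim nonzero] by (simp add: gauss_map_def assms(2) nonzero)
  ultimately show ?thesis
    by (rule Lim_transform_eventually[rotated])
qed

lemma gauss_map_measurable:
  assumes vm: "(\<lambda>t. vector_derivative f (at t)) \<in> borel_measurable (lebesgue_on S)"
    and S: "S \<in> sets lebesgue" and N: "negligible N"
    and diff: "\<And>t. t \<in> S - N \<Longrightarrow> f differentiable (at t)"
  shows "gauss_map f \<in> lebesgue_on S \<rightarrow>\<^sub>M restrict_space borel (sphere 0 1)"
proof (rule measurable_restrict_space2)
  show "gauss_map f \<in> borel_measurable (lebesgue_on S)"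
  proof (rule borel_measurable_lebesgue_on_spike[OF _ S N])
    note vm[measurable]
    show "(\<lambda>t. if vector_derivative f (at t) \<noteq> 0 then sgn (vector_derivative f (at t)) else 1)
        \<in> borel_measurable (lebesgue_on S)"
      by measurable
    show "gauss_map f t = (if vector_derivative f (at t) \<noteq> 0 then sgn (vector_derivative f (at t)) else 1)"
      if "t \<in> S - N" for t
      using diff[OF that] by (simp add: gauss_map_def)
  qed
qed (use gauss_map_in_sphere in blast)

lemma integral_length_measure:
  fixes g :: "complex \<Rightarrow> real"
  assumes G: "gauss_map f \<in> lebesgue_on {0..<2*pi} \<rightarrow>\<^sub>M restrict_space borel (sphere 0 1)"
    and vm: "(\<lambda>t. vector_derivative f (at t)) \<in> borel_measurable (lebesgue_on {0..<2*pi})"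
    and g: "continuous_on (sphere 0 1) g"
  shows "integral\<^sup>L (length_measure f) g = integral\<^sup>L (lebesgue_on {0..<2*pi})
     (\<lambda>t. norm (vector_derivative f (at t)) * g (gauss_map f t))"
proof -
  let ?M = "lebesgue_on {0..<2*pi}" and ?w = "\<lambda>t. norm (vector_derivative f (at t))"
  have gm: "g \<in> borel_measurable (restrict_space borel (sphere 0 1))"
    using g by (rule borel_measurable_continuous_on_restrict)
  have "integral\<^sup>L (length_measure f) g = integral\<^sup>L (density ?M ?w) (\<lambda>t. g (gauss_map f t))"
    unfolding length_measure_def
    by (rule integral_distr) (use G gm in \<open>simp_all cong: measurable_cong_sets\<close>)
  also have "\<dots> = integral\<^sup>L ?M (\<lambda>t. ?w t *\<^sub>R g (gauss_map f t))"
    by (rule integral_density) (use measurable_compose[OF G gm] vm in auto)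
  finally show ?thesis
    by simp
qed

lemma AE_lebesgue_on_outside_negligible:
  assumes "negligible N" "S \<in> sets lebesgue" "\<And>t. t \<in> S - N \<Longrightarrow> P t"
  shows "AE t in lebesgue_on S. P t"
proof -
  have "AE t in lebesgue. t \<in> S \<longrightarrow> P t"
    by (rule AE_I'[of N]) (use assms negligible_iff_null_sets in auto)
  then show ?thesis
    using assms(2) by (simp add: AE_restrict_space_iff)
qed

lemma weak_conv_circle_length_measure:
  fixes f :: "real \<Rightarrow> complex" and fs :: "nat \<Rightarrow> real \<Rightarrow> complex"
  assumes N: "negligible N"
    and vm: "(\<lambda>t. vector_derivative f (at t)) \<in> borel_measurable (lebesgue_on {0..<2*pi})"
    and vms: "\<And>n. (\<lambda>t. vector_derivative (fs n) (at t)) \<in> borel_measurable (lebesgue_on {0..<2*pi})"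
    and diff: "\<And>t. t \<in> {0..<2*pi} - N \<Longrightarrow> f differentiable (at t)"
    and nonzero: "\<And>t. t \<in> {0..<2*pi} - N \<Longrightarrow> vector_derivative f (at t) \<noteq> 0"
    and diffs: "\<And>n t. t \<in> {0..<2*pi} - N \<Longrightarrow> fs n differentiable (at t)"
    and bound: "\<And>n t. t \<in> {0..<2*pi} - N \<Longrightarrow> norm (vector_derivative (fs n) (at t)) \<le> L"
    and lim: "\<And>t. t \<in> {0..<2*pi} - N \<Longrightarrow>
      (\<lambda>n. vector_derivative (fs n) (at t)) \<longlonglongrightarrow> vector_derivative f (at t)"
  shows "weak_conv_circle (\<lambda>n. length_measure (fs n)) (length_measure f)"
  unfolding weak_conv_circle_def
proof (intro allI impI)
  let ?S = "{0..<2*pi}" and ?M = "lebesgue_on {0..<2*pi}"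
  have S: "?S \<in> sets lebesgue" by simp
  have G: "gauss_map f \<in> ?M \<rightarrow>\<^sub>M restrict_space borel (sphere 0 1)"
    by (rule gauss_map_measurable[OF vm S N diff])
  have Gs: "gauss_map (fs n) \<in> ?M \<rightarrow>\<^sub>M restrict_space borel (sphere 0 1)" for n
    by (rule gauss_map_measurable[OF vms S N diffs])
  fix g :: "complex \<Rightarrow> real" assume g: "continuous_on (sphere 0 1) g"
  have gm: "g \<in> borel_measurable (restrict_space borel (sphere 0 1))"
    using g by (rule borel_measurable_continuous_on_restrict)
  have "compact (g ` sphere 0 1)"
    by (intro compact_continuous_image g) simp
  then obtain B where B: "\<And>z. z \<in> sphere 0 1 \<Longrightarrow> \<bar>g z\<bar> \<le> B"
    using compact_imp_bounded bounded_iff by (metis image_eqI real_norm_def)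
  show "(\<lambda>n. integral\<^sup>L (length_measure (fs n)) g) \<longlonglongrightarrow> integral\<^sup>L (length_measure f) g"
    unfolding integral_length_measure[OF G vm g] integral_length_measure[OF Gs vms g]
  proof (rule integral_dominated_convergence[where w="\<lambda>_. L * B"])
    show "(\<lambda>t. norm (vector_derivative f (at t)) * g (gauss_map f t)) \<in> borel_measurable ?M"
      using measurable_compose[OF G gm] vm by measurable
    show "(\<lambda>t. norm (vector_derivative (fs n) (at t)) * g (gauss_map (fs n) t)) \<in> borel_measurable ?M" for n
      using measurable_compose[OF Gs gm] vms by measurable
    show "integrable ?M (\<lambda>_. L * B)"
      by (intro finite_measure.integrable_const finite_measure_lebesgue_on bounded_set_imp_lmeasurable)
        (auto intro: bounded_subset[of "{0..2*pi}"])
    show "AE t in ?M. norm (norm (vector_derivative (fs n) (at t)) * g (gauss_map (fs n) t)) \<le> L * B" for n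
    proof (rule AE_lebesgue_on_outside_negligible[OF N S])
      fix t assume t: "t \<in> ?S - N"
      have "0 \<le> B" "\<bar>g (gauss_map (fs n) t)\<bar> \<le> B"
        using B[of 1] B[OF gauss_map_in_sphere] by auto
      then show "norm (norm (vector_derivative (fs n) (at t)) * g (gauss_map (fs n) t)) \<le> L * B"
        using bound[OF t, of n] by (simp add: abs_mult mult_mono')
    qed
    show "AE t in ?M. (\<lambda>n. norm (vector_derivative (fs n) (at t)) * g (gauss_map (fs n) t))
        \<longlonglongrightarrow> norm (vector_derivative f (at t)) * g (gauss_map f t)"
    proof (rule AE_lebesgue_on_outside_negligible[OF N S])
      fix t assume t: "t \<in> ?S - N"
      have "(\<lambda>n. gauss_map (fs n) t) \<longlonglongrightarrow> gauss_map f t"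
        by (rule gauss_map_tendsto[OF lim[OF t] diff[OF t] nonzero[OF t] diffs[OF t]])
      then have "(\<lambda>n. g (gauss_map (fs n) t)) \<longlonglongrightarrow> g (gauss_map f t)"
        by (rule continuous_on_tendsto_compose[OF g]) (use gauss_map_in_sphere in auto)
      then show "(\<lambda>n. norm (vector_derivative (fs n) (at t)) * g (gauss_map (fs n) t))
          \<longlonglongrightarrow> norm (vector_derivative f (at t)) * g (gauss_map f t)"
        by (intro tendsto_intros lim[OF t])
    qed
  qed
qed

lemma partition_segment_exists:
  fixes \<theta> :: "nat \<Rightarrow> real"
  assumes "\<forall>i<k. \<theta> i < \<theta> (Suc i)" "\<theta> 0 \<le> t" "t < \<theta> k"
  shows "\<exists>i<k. \<theta> i \<le> t \<and> t < \<theta> (Suc i)"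
  using assms
proof (induction k)
  case 0
  then show ?case by simp
next
  case (Suc k)
  show ?case
  proof (cases "t < \<theta> k")
    case True
    with Suc show ?thesis by (meson less_Suc_eq)
  next
    case False
    with Suc.prems show ?thesis by (intro exI[of _ k]) auto
  qed
qed

lemma partition_segment_unique:
  fixes \<theta> :: "nat \<Rightarrow> real"
  assumes inc: "\<forall>i<k. \<theta> i < \<theta> (Suc i)" and "i < k" "j < k"
    and "t \<in> {\<theta> i<..<\<theta> (Suc i)}" "t \<in> {\<theta> j<..<\<theta> (Suc j)}"
  shows "i = j"
proof -
  have le: "\<theta> (Suc i') \<le> \<theta> j'" if "i' < j'" "j' < k" for i' j'
    using lift_Suc_mono_le_ivl[of "{..<k}" \<theta> "Suc i'" j'] inc that by force
  show ?thesis
    using le[of i j] le[of j i] assms(2-5) by (cases i j rule: linorder_cases) auto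
qed

lemma partition_gap_le_mesh:
  fixes \<theta> :: "nat \<Rightarrow> real"
  assumes "i < k"
  shows "\<theta> (Suc i) - \<theta> i \<le> Max {\<theta> (Suc j) - \<theta> j | j. j < k}"
  using assms by (auto simp: Setcompr_eq_image intro!: Max_ge)

lemma polygonal_interp_has_vector_derivative:
  assumes P: "polygonal_interp c \<theta> k d" and i: "i < k" "t \<in> {\<theta> i<..<\<theta> (Suc i)}"
  shows "(d has_vector_derivative chord_slope c (\<theta> i) (\<theta> (Suc i))) (at t)"
proof -
  let ?D = "\<theta> (Suc i) - \<theta> i" and ?C = "c (\<theta> (Suc i)) - c (\<theta> i)"
  let ?line = "\<lambda>s. c (\<theta> i) + ((s - \<theta> i) / ?D) *\<^sub>R ?C"
  have "(?line has_vector_derivative (1 / ?D) *\<^sub>R ?C) (at t)"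
    using i by (auto intro!: derivative_eq_intros)
  then have "(?line has_vector_derivative chord_slope c (\<theta> i) (\<theta> (Suc i))) (at t)"
    by (simp add: chord_slope_def divide_inverse_commute)
  then show ?thesis
  proof (rule has_vector_derivative_transform_within_open[OF _ open_greaterThanLessThan i(2)])
    show "?line s = d s" if "s \<in> {\<theta> i<..<\<theta> (Suc i)}" for s
      using P i that unfolding polygonal_interp_def by (auto simp: scaleR_conv_of_real)
  qed
qed

lemma polygonal_interp_vector_derivative:
  assumes "polygonal_interp c \<theta> k d" "i < k" "t \<in> {\<theta> i<..<\<theta> (Suc i)}"
  shows "d differentiable (at t)" "vector_derivative d (at t) = chord_slope c (\<theta> i) (\<theta> (Suc i))"
  using polygonal_interp_has_vector_derivative[OF assms] differentiableI_vector vector_derivative_at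
  by blast+

lemma polygonal_interp_segment:
  assumes P: "polygonal_interp c \<theta> k d" and t: "t \<in> {0..<2*pi}" "t \<notin> range \<theta>"
  obtains i where "i < k" "t \<in> {\<theta> i<..<\<theta> (Suc i)}"
proof -
  obtain i where "i < k" "\<theta> i \<le> t" "t < \<theta> (Suc i)"
    using partition_segment_exists[of k \<theta> t] P t(1) unfolding polygonal_interp_def by auto
  moreover have "\<theta> i \<noteq> t"
    using t(2) by auto
  ultimately show ?thesis
    using that by auto
qed

lemma polygonal_interp_differentiable:
  assumes "polygonal_interp c \<theta> k d" "t \<in> {0..<2*pi}" "t \<notin> range \<theta>"
  shows "d differentiable (at t)"
  using polygonal_interp_segment[OF assms] polygonal_interp_vector_derivative(1)[OF assms(1)] by metis

lemma polygonal_interp_norm_vector_derivative_le: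
  assumes L: "L-lipschitz_on UNIV c"
    and P: "polygonal_interp c \<theta> k d" and t: "t \<in> {0..<2*pi}" "t \<notin> range \<theta>"
  shows "norm (vector_derivative d (at t)) \<le> L"
proof -
  obtain i where i: "i < k" "t \<in> {\<theta> i<..<\<theta> (Suc i)}"
    using polygonal_interp_segment[OF P t] .
  then show ?thesis
    using norm_chord_slope_le[OF L, of "\<theta> i" "\<theta> (Suc i)"] polygonal_interp_vector_derivative(2)[OF P i]
    by simp
qed

lemma polygonal_interp_vector_derivative_measurable:
  assumes P: "polygonal_interp c \<theta> k d"
  shows "(\<lambda>t. vector_derivative d (at t)) \<in> borel_measurable (lebesgue_on {0..<2*pi})"
proof (rule borel_measurable_lebesgue_on_spike)
  let ?step = "\<lambda>t. \<Sum>i<k. if \<theta> i < t \<and> t < \<theta> (Suc i) then chord_slope c (\<theta> i) (\<theta> (Suc i)) else 0"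
  have [measurable]: "(\<lambda>t. t) \<in> borel_measurable (lebesgue_on {0..<2*pi})"
    using id_borel_measurable_lebesgue_on by (simp add: id_def)
  show "?step \<in> borel_measurable (lebesgue_on {0..<2*pi})"
    by measurable
  show "negligible (range \<theta>)"
    by (simp add: countable_imp_negligible)
  fix t assume "t \<in> {0..<2*pi} - range \<theta>"
  then obtain i where i: "i < k" "t \<in> {\<theta> i<..<\<theta> (Suc i)}"
    using polygonal_interp_segment[OF P] by blast
  have inc: "\<forall>i<k. \<theta> i < \<theta> (Suc i)"
    using P by (simp add: polygonal_interp_def)
  have "?step t = (\<Sum>j<k. if j = i then chord_slope c (\<theta> i) (\<theta> (Suc i)) else 0)"
    by (rule sum.cong) (use partition_segment_unique[OF inc] i in auto)
  then show "vector_derivative d (at t) = ?step t"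
    using polygonal_interp_vector_derivative(2)[OF P i] i(1) by simp
qed simp

lemma polygonal_interp_vector_derivative_tendsto:
  assumes P: "\<And>n. polygonal_interp c (\<theta> n) (k n) (cn n)"
    and mesh: "(\<lambda>n. Max {\<theta> n (Suc i) - \<theta> n i | i. i < k n}) \<longlonglongrightarrow> 0"
    and der: "(c has_vector_derivative D) (at t)"
    and t: "t \<in> {0..<2*pi}" "\<And>n. t \<notin> range (\<theta> n)"
  shows "(\<lambda>n. vector_derivative (cn n) (at t)) \<longlonglongrightarrow> D"
proof -
  have "\<forall>n. \<exists>i. i < k n \<and> t \<in> {\<theta> n i<..<\<theta> n (Suc i)}"
    using polygonal_interp_segment[OF P t(1) t(2)] by metis
  then obtain seg where seg: "\<And>n. seg n < k n" "\<And>n. t \<in> {\<theta> n (seg n)<..<\<theta> n (Suc (seg n))}"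
    by metis
  have around: "\<theta> n (seg n) \<le> t" "t \<le> \<theta> n (Suc (seg n))" "\<theta> n (seg n) < \<theta> n (Suc (seg n))" for n
    using seg(2)[of n] by auto
  have "(\<lambda>n. \<theta> n (Suc (seg n)) - \<theta> n (seg n)) \<longlonglongrightarrow> 0"
  proof (rule real_tendsto_sandwich[OF _ _ tendsto_const mesh])
    show "\<forall>\<^sub>F n in sequentially. 0 \<le> \<theta> n (Suc (seg n)) - \<theta> n (seg n)"
      using around(3) by (auto intro!: always_eventually less_imp_le)
    show "\<forall>\<^sub>F n in sequentially. \<theta> n (Suc (seg n)) - \<theta> n (seg n) \<le> Max {\<theta> n (Suc i) - \<theta> n i | i. i < k n}"
      using seg(1) by (auto intro!: always_eventually partition_gap_le_mesh)
  qed
  then have "(\<lambda>n. chord_slope c (\<theta> n (seg n)) (\<theta> n (Suc (seg n)))) \<longlonglongrightarrow> D"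
    by (rule chord_slope_tendsto_vector_derivative[OF der around])
  then show ?thesis
    using polygonal_interp_vector_derivative(2)[OF P seg] by simp
qed

lemma curve_class_regular_outside_negligible:
  assumes "curve_class c"
  obtains L N where "L-lipschitz_on UNIV c" "negligible N"
    "\<And>t. t \<notin> N \<Longrightarrow> c differentiable (at t)" "\<And>t. t \<notin> N \<Longrightarrow> vector_derivative c (at t) \<noteq> 0"
proof -
  obtain L where L: "L-lipschitz_on UNIV c"
    and AE: "AE t in lborel. c differentiable (at t) \<and> vector_derivative c (at t) \<noteq> 0"
    using assms unfolding curve_class_def by blast
  obtain N where "\<And>t. t \<in> space lebesgue - N \<Longrightarrow> c differentiable (at t) \<and> vector_derivative c (at t) \<noteq> 0"
    and "N \<in> null_sets lebesgue"
    using AE_E3[OF AE_completion[OF AE]] by blast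
  with L show ?thesis
    using that by (simp add: negligible_iff_null_sets)
qed

theorem proposition2p12:
  fixes c :: "real \<Rightarrow> complex"
    and \<theta> :: "nat \<Rightarrow> nat \<Rightarrow> real"
    and k :: "nat \<Rightarrow> nat"
    and cn :: "nat \<Rightarrow> real \<Rightarrow> complex"
  assumes "curve_class c"
    and "piecewise_C2_bounded c"
    and "\<And>n. polygonal_interp c (\<theta> n) (k n) (cn n)"
    and "(\<lambda>n. Max {\<theta> n (Suc i) - \<theta> n i | i. i < k n}) \<longlonglongrightarrow> 0"
  shows "weak_conv_circle (\<lambda>n. length_measure (cn n)) (length_measure c)"
proof -
  obtain L N where L: "L-lipschitz_on UNIV c" and N: "negligible N"
    and diff: "\<And>t. t \<notin> N \<Longrightarrow> c differentiable (at t)"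
    and nonzero: "\<And>t. t \<notin> N \<Longrightarrow> vector_derivative c (at t) \<noteq> 0"
    using curve_class_regular_outside_negligible[OF assms(1)] by blast
  define nodes where "nodes = (\<Union>n. range (\<theta> n))"
  have "negligible nodes"
    unfolding nodes_def by (simp add: countable_imp_negligible)
  have off_nodes: "t \<in> {0..<2*pi}" "t \<notin> range (\<theta> n)" if "t \<in> {0..<2*pi} - (N \<union> nodes)" for n t
    using that by (auto simp: nodes_def)
  show ?thesis
  proof (rule weak_conv_circle_length_measure[where N = "N \<union> nodes" and L = L])
    show "negligible (N \<union> nodes)"
      using N \<open>negligible nodes\<close> by simp
    show "(\<lambda>t. vector_derivative c (at t)) \<in> borel_measurable (lebesgue_on {0..<2*pi})"
      by (rule borel_measurable_vector_derivative[OF lipschitz_on_continuous_on[OF L] _ N]) (use diff in auto)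
    show "(\<lambda>t. vector_derivative (cn n) (at t)) \<in> borel_measurable (lebesgue_on {0..<2*pi})" for n
      by (rule polygonal_interp_vector_derivative_measurable[OF assms(3)])
    show "c differentiable (at t)" "vector_derivative c (at t) \<noteq> 0" if "t \<in> {0..<2*pi} - (N \<union> nodes)" for t
      using that diff nonzero by auto
    show "cn n differentiable (at t)" if "t \<in> {0..<2*pi} - (N \<union> nodes)" for n t
      using polygonal_interp_differentiable[OF assms(3) off_nodes[OF that]] .
    show "norm (vector_derivative (cn n) (at t)) \<le> L" if "t \<in> {0..<2*pi} - (N \<union> nodes)" for n t
      using polygonal_interp_norm_vector_derivative_le[OF L assms(3) off_nodes[OF that]] .
    show "(\<lambda>n. vector_derivative (cn n) (at t)) \<longlonglongrightarrow> vector_derivative c (at t)"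
      if "t \<in> {0..<2*pi} - (N \<union> nodes)" for t
    proof (rule polygonal_interp_vector_derivative_tendsto[OF assms(3,4) _ off_nodes[OF that]])
      show "(c has_vector_derivative vector_derivative c (at t)) (at t)"
        using that diff vector_derivative_works by blast
    qed
  qed
qed

end
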